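(* Let $G$ be a persistent graph with vertex order $<$ and let $p,q,r\in V(G)$ with $p<q<r$. If $\{p,q\}\in E(G)$ and $\{p,r\}\in E(G)$ but $\{q,r\}\notin E(G)$, then $p$ and $q$ have a common neighbor $b\in V(G)$ with $q<b<r$.
   Context: A persistent graph is a graph $G$ together with a linear order $v_1<v_2<\dots<v_n$ on $V(G)$ such that (1) $\{v_i,v_{i+1}\}\in E(G)$ for all $i$; (2) X-property: for all $p<q<r<s$, if $\{p,r\}\in E(G)$ and $\{q,s\}\in E(G)$ then $\{p,s\}\in E(G)$; (3) bar-property: if $\{p,q\}\in E(G)$ and $p,q$ are not consecutive in the order, then there is a vertex $r$ with $p<r<q$ adjacent to both $p$ and $q$. *)

theory Defs
  imports Main
begin

(* The linear order on V(G) is the order of the ambient type restricted to V. *)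
definition simple_graph :: "'a set \<Rightarrow> ('a \<Rightarrow> 'a \<Rightarrow> bool) \<Rightarrow> bool" where
  "simple_graph V E \<longleftrightarrow> finite V \<and>
     (\<forall>x y. E x y \<longrightarrow> x \<in> V \<and> y \<in> V) \<and>
     (\<forall>x y. E x y \<longrightarrow> E y x) \<and> (\<forall>x. \<not> E x x)"

definition consecutive :: "'a::linorder set \<Rightarrow> 'a \<Rightarrow> 'a \<Rightarrow> bool" where
  "consecutive V x y \<longleftrightarrow> x \<in> V \<and> y \<in> V \<and> x < y \<and> \<not> (\<exists>z\<in>V. x < z \<and> z < y)"

definition persistent :: "'a::linorder set \<Rightarrow> ('a \<Rightarrow> 'a \<Rightarrow> bool) \<Rightarrow> bool" where
  "persistent V E \<longleftrightarrow> simple_graph V E \<and>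
     \<comment> \<open>(1) consecutive vertices are adjacent\<close>
     (\<forall>x y. consecutive V x y \<longrightarrow> E x y) \<and>
     \<comment> \<open>(2) X-property\<close>
     (\<forall>p\<in>V. \<forall>q\<in>V. \<forall>r\<in>V. \<forall>s\<in>V. p < q \<and> q < r \<and> r < s \<and> E p r \<and> E q s \<longrightarrow> E p s) \<and>
     \<comment> \<open>(3) bar-property\<close>
     (\<forall>p\<in>V. \<forall>q\<in>V. p < q \<and> E p q \<and> \<not> consecutive V p q \<longrightarrow>
        (\<exists>r\<in>V. p < r \<and> r < q \<and> E p r \<and> E r q))"

end

theory Submission
  imports Defs
begin

(* Let m be the first neighbour of p after q. The heart of the proof is that q and m are then
   adjacent, shown by induction on the number of vertices above p. The bar-property yields a
   neighbour of m in the interval (p, q]; take the largest one, a. If a < q, the last neighbour q'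
   of a before m still lies in (a, q], for otherwise the X-property on p < a < q < q' would make
   q' a neighbour of p between q and m. As m is then the first neighbour of a after q', the induction
   hypothesis for a makes q' adjacent to m, contradicting the choice of a. Hence a = q. Finally
   m <= r, and m <> r because q is not adjacent to r. *)

lemma persistent_finite: "persistent V E \<Longrightarrow> finite V"
  unfolding persistent_def simple_graph_def by blast

lemma persistent_consecutive: "persistent V E \<Longrightarrow> consecutive V x y \<Longrightarrow> E x y"
  unfolding persistent_def by blast

lemma persistent_X:
  "\<lbrakk>persistent V E; p \<in> V; q \<in> V; r \<in> V; s \<in> V; p < q; q < r; r < s; E p r; E q s\<rbrakk>
    \<Longrightarrow> E p s"
  unfolding persistent_def by blast

lemma persistent_bar:
  "\<lbrakk>persistent V E; p \<in> V; q \<in> V; p < q; E p q; \<not> consecutive V p q\<rbrakk>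
    \<Longrightarrow> \<exists>r\<in>V. p < r \<and> r < q \<and> E p r \<and> E r q"
  unfolding persistent_def by blast

lemma persistent_neighbour_above:
  assumes "persistent V E" "a \<in> V" "q \<in> V" "a < q"
  shows "\<exists>s\<in>V. a < s \<and> s \<le> q \<and> E a s"
proof -
  let ?S = "{x\<in>V. a < x}"
  have "finite ?S" using persistent_finite[OF assms(1)] by simp
  moreover have "q \<in> ?S" using assms by simp
  ultimately have s: "Min ?S \<in> ?S" "Min ?S \<le> q" and s_min: "\<And>x. x \<in> ?S \<Longrightarrow> Min ?S \<le> x"
    using Min_in Min_le by blast+
  have "consecutive V a (Min ?S)"
    unfolding consecutive_def using assms(2) s(1) s_min by (auto simp: not_less[symmetric])
  then show ?thesis using s persistent_consecutive[OF assms(1)] by blast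
qed

lemma card_greater_strict_antimono:
  assumes "finite V" "a \<in> V" "p < (a::'a::linorder)"
  shows "card {x\<in>V. a < x} < card {x\<in>V. p < x}"
proof (rule psubset_card_mono)
  show "finite {x\<in>V. p < x}" using assms(1) by simp
  show "{x\<in>V. a < x} \<subset> {x\<in>V. p < x}" using assms(2,3) by auto
qed

lemma persistent_next_neighbour_adjacent:
  assumes "persistent V E" "p \<in> V" "q \<in> V" "m \<in> V" "p < q" "q < m" "E p q" "E p m"
    and "\<forall>x\<in>V. q < x \<and> x < m \<longrightarrow> \<not> E p x"
  shows "E q m"
  using assms(2-)
proof (induction "card {x\<in>V. p < x}" arbitrary: p q rule: less_induct)
  case less
  note P = assms(1)
  have fin: "finite V" using persistent_finite[OF P] .
  let ?A = "{a\<in>V. p < a \<and> a \<le> q \<and> E a m}"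
  define a where "a = Max ?A"
  have "\<not> consecutive V p m" using less.prems unfolding consecutive_def by blast
  then obtain m1 where "m1 \<in> V" "p < m1" "m1 < m" "E p m1" "E m1 m"
    using persistent_bar[OF P less.prems(1,3)] less.prems by (meson less_trans)
  then have "m1 \<in> ?A" using less.prems(8) not_le by blast
  moreover have "finite ?A" using fin by simp
  ultimately have a: "a \<in> ?A" and a_max: "\<And>x. x \<in> ?A \<Longrightarrow> x \<le> a"
    unfolding a_def using Max_in Max_ge by blast+
  show "E q m"
  proof (rule ccontr)
    assume "\<not> E q m"
    with a have "a < q" by (auto simp: order_le_less)
    let ?B = "{x\<in>V. a < x \<and> x < m \<and> E a x}"
    define q' where "q' = Max ?B"
    obtain s where "s \<in> ?B"
      using persistent_neighbour_above[OF P _ less.prems(2) \<open>a < q\<close>] a less.prems(5) by force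
    moreover have "finite ?B" using fin by simp
    ultimately have q': "q' \<in> ?B" and q'_max: "\<And>x. x \<in> ?B \<Longrightarrow> x \<le> q'"
      unfolding q'_def using Max_in Max_ge by blast+
    have "q' \<le> q"
    proof (rule ccontr)
      assume "\<not> q' \<le> q"
      then have "E p q'"
        using persistent_X[OF P less.prems(1) _ less.prems(2), of a q'] \<open>a < q\<close> a q' less.prems(6)
        by (auto simp: not_le)
      with \<open>\<not> q' \<le> q\<close> q' less.prems(8) show False by auto
    qed
    have "E q' m"
    proof (rule less.hyps)
      show "card {x\<in>V. a < x} < card {x\<in>V. p < x}" using card_greater_strict_antimono[OF fin] a by blast
      show "\<forall>x\<in>V. q' < x \<and> x < m \<longrightarrow> \<not> E a x"
      proof (intro ballI impI notI)
        fix x assume "x \<in> V" "q' < x \<and> x < m" "E a x"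
        with q' have "x \<in> ?B" by auto
        with \<open>q' < x \<and> x < m\<close> q'_max show False by fastforce
      qed
    qed (use a q' less.prems(3) in auto)
    then have "q' \<in> ?A" using q' a \<open>q' \<le> q\<close> by auto
    with q' a_max show False by fastforce
  qed
qed

theorem lemma2:
  fixes V :: "'a::linorder set" and E :: "'a \<Rightarrow> 'a \<Rightarrow> bool"
  assumes "persistent V E"
    and "p \<in> V" and "q \<in> V" and "r \<in> V"
    and "p < q" and "q < r"
    and "E p q" and "E p r" and "\<not> E q r"
  shows "\<exists>b\<in>V. q < b \<and> b < r \<and> E p b \<and> E q b"
proof -
  let ?N = "{x\<in>V. q < x \<and> E p x}"
  define m where "m = Min ?N"
  have fin: "finite ?N" using persistent_finite[OF assms(1)] by simp
  have "r \<in> ?N" using assms by simp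
  then have m: "m \<in> ?N" "m \<le> r" and m_min: "\<And>x. x \<in> ?N \<Longrightarrow> m \<le> x"
    using fin Min_in Min_le unfolding m_def by blast+
  have "E q m"
  proof (rule persistent_next_neighbour_adjacent[OF assms(1,2,3)])
    show "\<forall>x\<in>V. q < x \<and> x < m \<longrightarrow> \<not> E p x" using m_min by (auto simp: not_le[symmetric])
  qed (use m assms in auto)
  with assms(9) m have "m < r" by (auto simp: order_le_less)
  with m \<open>E q m\<close> show ?thesis by blast
qed

end
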